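(* There are absolute constants $c_1,c_2>0$ such that for every $n\ge2$, every $0<\rho\le1/3$ and every $0<s\le c_1/\log(1/\rho)$, there exists an $n$-agent symmetric averaging system with parameter $\rho$ whose $s$-energy satisfies $\mathcal{E}(s)\ge\bigl(c_2/(\rho s)\bigr)^{n-1}$.
   Context: A (symmetric) averaging system with parameter $\rho\in(0,1/2]$ on $n$ agents consists of an infinite sequence of undirected graphs $(g_t)_{t\ge1}$ on $\{1,\dots,n\}$, each with a self-loop at every vertex, together with positions $x_i(t)\in[0,1]$ obeying: for each $t$ and vertex $i$, with $L_i(t)=\min\{x_j(t): \{i,j\}\in g_t\}$, $R_i(t)=\max\{x_j(t): \{i,j\}\in g_t\}$ and $\delta_i(t)=\rho(R_i(t)-L_i(t))$, the new position satisfies $L_i(t)+\delta_i(t)\le x_i(t+1)\le R_i(t)-\delta_i(t)$. Its $s$-energy is $\sum_{t\ge1}\ell_t$, where $\ell_t=\sum_m\mu_m^s$ over the lengths $\mu_m$ of the maximal intervals of the union of the segments between $x_i(t)$ and $x_j(t)$ over edges $\{i,j\}\in g_t$ (with $0^s=0$). Logarithms are base 2. *)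

theory Defs
  imports "HOL-Analysis.Analysis"
begin

text \<open>Agents are 1..n. Graphs: g t i j (undirected edge at time t). Positions: x t i.
  Times t range over t >= 1.\<close>

definition Lpos :: "nat \<Rightarrow> (nat \<Rightarrow> nat \<Rightarrow> nat \<Rightarrow> bool) \<Rightarrow> (nat \<Rightarrow> nat \<Rightarrow> real) \<Rightarrow> nat \<Rightarrow> nat \<Rightarrow> real" where
  "Lpos n g x t i = Min {x t j | j. j \<in> {1..n} \<and> g t i j}"

definition Rpos :: "nat \<Rightarrow> (nat \<Rightarrow> nat \<Rightarrow> nat \<Rightarrow> bool) \<Rightarrow> (nat \<Rightarrow> nat \<Rightarrow> real) \<Rightarrow> nat \<Rightarrow> nat \<Rightarrow> real" where
  "Rpos n g x t i = Max {x t j | j. j \<in> {1..n} \<and> g t i j}"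

definition averaging_system :: "nat \<Rightarrow> real \<Rightarrow> (nat \<Rightarrow> nat \<Rightarrow> nat \<Rightarrow> bool) \<Rightarrow> (nat \<Rightarrow> nat \<Rightarrow> real) \<Rightarrow> bool" where
  "averaging_system n \<rho> g x \<longleftrightarrow>
     0 < \<rho> \<and> \<rho> \<le> 1/2 \<and>
     (\<forall>t\<ge>1.
        (\<forall>i j. g t i j \<longrightarrow> i \<in> {1..n} \<and> j \<in> {1..n}) \<and>
        (\<forall>i j. g t i j = g t j i) \<and>
        (\<forall>i\<in>{1..n}. g t i i) \<and>
        (\<forall>i\<in>{1..n}. x t i \<in> {0..1}) \<and>
        (\<forall>i\<in>{1..n}.
           Lpos n g x t i + \<rho> * (Rpos n g x t i - Lpos n g x t i) \<le> x (Suc t) i \<and>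
           x (Suc t) i \<le> Rpos n g x t i - \<rho> * (Rpos n g x t i - Lpos n g x t i)))"

definition seg_union :: "nat \<Rightarrow> (nat \<Rightarrow> nat \<Rightarrow> nat \<Rightarrow> bool) \<Rightarrow> (nat \<Rightarrow> nat \<Rightarrow> real) \<Rightarrow> nat \<Rightarrow> real set" where
  "seg_union n g x t = \<Union> {closed_segment (x t i) (x t j) | i j. i \<in> {1..n} \<and> j \<in> {1..n} \<and> g t i j}"

text \<open>ell_t: sum over maximal intervals (connected components) of the union, of length^s
  (0 powr s = 0 by convention of powr).\<close>
definition ell :: "nat \<Rightarrow> (nat \<Rightarrow> nat \<Rightarrow> nat \<Rightarrow> bool) \<Rightarrow> (nat \<Rightarrow> nat \<Rightarrow> real) \<Rightarrow> real \<Rightarrow> nat \<Rightarrow> real" where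
  "ell n g x s t = (\<Sum>C\<in>components (seg_union n g x t). (Sup C - Inf C) powr s)"

definition s_energy :: "nat \<Rightarrow> (nat \<Rightarrow> nat \<Rightarrow> nat \<Rightarrow> bool) \<Rightarrow> (nat \<Rightarrow> nat \<Rightarrow> real) \<Rightarrow> real \<Rightarrow> ennreal" where
  "s_energy n g x s = (\<Sum>t. ennreal (ell n g x s (Suc t)))"

end

theory Submission
  imports Defs
begin

text \<open>The system is built recursively on a tail a..n of agents in which agent a sits at distance D
  above the others, which coincide. One round lets the edge a, a+1 move agent a+1 up to distance
  \<rho>D above the rest of the tail and agent a down by \<rho>D, and then recursively collapses the tail
  a+1..n to a point. The round costs at least D^s, plus \<rho>^s D^s times the energy of the smaller
  cascade, and leaves a gap of at least (1-2\<rho>)D above the collapsed tail. After m \<approx> 1/(\<rho>s) rounds,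
  during which the gap stays above 2^(-1/s) D, a clique merges the whole tail. Hence the energy
  E_k of a k-level cascade satisfies E_(k+1) \<ge> (m/2)(1 + \<rho>^s E_k); since \<rho>^s \<ge> 1/2 when
  s log(1/\<rho>) is small, E_(n-1) \<ge> (m/4)^(n-1), which is of order (1/(\<rho>s))^(n-1).\<close>

type_synonym graph = "nat \<Rightarrow> nat \<Rightarrow> bool"
type_synonym positions = "nat \<Rightarrow> real"
type_synonym schedule = "(graph \<times> positions) list"

lemma abs_diff_le_Sup_minus_Inf:
  fixes C :: "real set"
  assumes "bounded C" "a \<in> C" "b \<in> C"
  shows "\<bar>a - b\<bar> \<le> Sup C - Inf C"
  using assms cSup_upper[of _ C] cInf_lower[of _ C]
  by (smt (verit) bounded_imp_bdd_above bounded_imp_bdd_below)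

lemma finite_components_Union_connected:
  assumes "finite \<S>" "\<And>S. S \<in> \<S> \<Longrightarrow> connected S"
  shows "finite (components (\<Union>\<S>))"
proof -
  let ?cc = "\<lambda>S. connected_component_set (\<Union>\<S>) (SOME y. y \<in> S)"
  have "components (\<Union>\<S>) \<subseteq> ?cc ` \<S>"
  proof
    fix C assume "C \<in> components (\<Union>\<S>)"
    then obtain S y where S: "S \<in> \<S>" "y \<in> S" and C: "C = connected_component_set (\<Union>\<S>) y"
      by (auto elim: componentsE)
    have "S \<subseteq> ?cc S"
      using S assms(2) by (intro connected_component_maximal) (auto intro: someI)
    then have "C = ?cc S"
      using S C connected_component_eq by blast
    with S show "C \<in> ?cc ` \<S>" by blast
  qed
  then show ?thesis
    using assms(1) finite_subset by blast
qed

context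
  fixes n :: nat
begin

definition graph_on :: "graph \<Rightarrow> bool" where
  "graph_on G \<longleftrightarrow> (\<forall>i j. G i j \<longrightarrow> i \<in> {1..n} \<and> j \<in> {1..n}) \<and>
     (\<forall>i j. G i j = G j i) \<and> (\<forall>i\<in>{1..n}. G i i)"

definition neighbour_positions :: "positions \<Rightarrow> graph \<Rightarrow> nat \<Rightarrow> real set" where
  "neighbour_positions x G i = {x j | j. j \<in> {1..n} \<and> G i j}"

definition averaging_step :: "real \<Rightarrow> positions \<Rightarrow> graph \<Rightarrow> positions \<Rightarrow> bool" where
  "averaging_step \<rho> x G y \<longleftrightarrow> graph_on G \<and> (\<forall>i\<in>{1..n}. x i \<in> {0..1}) \<and>
     (\<forall>i\<in>{1..n}. let N = neighbour_positions x G i in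
        Min N + \<rho> * (Max N - Min N) \<le> y i \<and> y i \<le> Max N - \<rho> * (Max N - Min N))"

definition step_energy :: "real \<Rightarrow> graph \<Rightarrow> positions \<Rightarrow> real" where
  "step_energy s G x =
     (\<Sum>C\<in>components (\<Union> {closed_segment (x i) (x j) | i j. i \<in> {1..n} \<and> j \<in> {1..n} \<and> G i j}).
        (Sup C - Inf C) powr s)"

lemma averaging_stepI:
  assumes "graph_on G" "\<forall>i\<in>{1..n}. x i \<in> {0..1}"
    and "\<And>i. i \<in> {1..n} \<Longrightarrow> \<exists>lo hi. lo \<le> hi \<and> neighbour_positions x G i = {lo, hi} \<and>
           lo + \<rho> * (hi - lo) \<le> y i \<and> y i \<le> hi - \<rho> * (hi - lo)"
  shows "averaging_step \<rho> x G y"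
proof -
  have "Min {lo, hi} = lo" "Max {lo, hi} = hi" if "lo \<le> hi" for lo hi :: real
    using that by auto
  then show ?thesis
    using assms unfolding averaging_step_def Let_def by metis
qed

lemma step_energy_nonneg: "step_energy s G x \<ge> 0"
  unfolding step_energy_def by (intro sum_nonneg) auto

lemma step_energy_ge_edge:
  assumes "0 \<le> s" "graph_on G" "G a b"
  shows "\<bar>x a - x b\<bar> powr s \<le> step_energy s G x"
proof -
  define \<S> where "\<S> = {closed_segment (x i) (x j) | i j. i \<in> {1..n} \<and> j \<in> {1..n} \<and> G i j}"
  have ab: "a \<in> {1..n}" "b \<in> {1..n}"
    using assms(2,3) unfolding graph_on_def by auto
  have "\<S> \<subseteq> (\<lambda>(i, j). closed_segment (x i) (x j)) ` ({1..n} \<times> {1..n})"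
    unfolding \<S>_def by auto
  then have fin: "finite \<S>"
    by (rule finite_subset) auto
  have seg: "closed_segment (x a) (x b) \<subseteq> \<Union>\<S>"
    unfolding \<S>_def using ab assms(3) by blast
  define C where "C = connected_component_set (\<Union>\<S>) (x a)"
  have C: "C \<in> components (\<Union>\<S>)"
    unfolding C_def using seg by (intro componentsI) auto
  have "closed_segment (x a) (x b) \<subseteq> C"
    unfolding C_def using seg by (intro connected_component_maximal) auto
  moreover have "bounded C"
    using fin unfolding C_def \<S>_def
    by (intro bounded_subset[OF compact_imp_bounded connected_component_subset] compact_Union) auto
  ultimately have "\<bar>x a - x b\<bar> \<le> Sup C - Inf C"
    by (intro abs_diff_le_Sup_minus_Inf) auto
  then have "\<bar>x a - x b\<bar> powr s \<le> (Sup C - Inf C) powr s"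
    using assms(1) by (intro powr_mono2) auto
  also have "\<dots> \<le> step_energy s G x"
    unfolding step_energy_def \<S>_def[symmetric]
    using C fin by (intro member_le_sum finite_components_Union_connected) (auto simp: \<S>_def)
  finally show ?thesis .
qed

end

lemma averaging_system_iff_steps:
  "averaging_system n \<rho> g x \<longleftrightarrow>
     0 < \<rho> \<and> \<rho> \<le> 1/2 \<and> (\<forall>t\<ge>1. averaging_step n \<rho> (x t) (g t) (x (Suc t)))"
  unfolding averaging_system_def averaging_step_def graph_on_def Lpos_def Rpos_def
    neighbour_positions_def Let_def by blast

lemma ell_eq_step_energy: "ell n g x s t = step_energy n s (g t) (x t)"
  unfolding ell_def seg_union_def step_energy_def ..

fun final_positions :: "positions \<Rightarrow> schedule \<Rightarrow> positions" where
  "final_positions x [] = x"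
| "final_positions x ((G, y) # L) = final_positions y L"

lemma final_positions_append [simp]:
  "final_positions x (L1 @ L2) = final_positions (final_positions x L1) L2"
  by (induction x L1 rule: final_positions.induct) auto

lemma final_positions_eq_last: "final_positions x L = last (x # map snd L)"
  by (induction x L rule: final_positions.induct) auto

context
  fixes n :: nat
begin

fun admissible :: "real \<Rightarrow> positions \<Rightarrow> schedule \<Rightarrow> bool" where
  "admissible \<rho> x [] \<longleftrightarrow> True"
| "admissible \<rho> x ((G, y) # L) \<longleftrightarrow> averaging_step n \<rho> x G y \<and> admissible \<rho> y L"

fun schedule_energy :: "real \<Rightarrow> positions \<Rightarrow> schedule \<Rightarrow> real" where
  "schedule_energy s x [] = 0"
| "schedule_energy s x ((G, y) # L) = step_energy n s G x + schedule_energy s y L"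

lemma admissible_append [simp]:
  "admissible \<rho> x (L1 @ L2) \<longleftrightarrow> admissible \<rho> x L1 \<and> admissible \<rho> (final_positions x L1) L2"
  by (induction x L1 rule: final_positions.induct) auto

lemma schedule_energy_append [simp]:
  "schedule_energy s x (L1 @ L2) = schedule_energy s x L1 + schedule_energy s (final_positions x L1) L2"
  by (induction x L1 rule: final_positions.induct) auto

lemma admissible_nth:
  "admissible \<rho> x L \<Longrightarrow> i < length L \<Longrightarrow>
     averaging_step n \<rho> ((x # map snd L) ! i) (fst (L ! i)) (snd (L ! i))"
proof (induction x L arbitrary: i rule: final_positions.induct)
  case (2 x G y L)
  then show ?case by (cases i) auto
qed simp

lemma schedule_energy_eq_sum:
  "schedule_energy s x L = (\<Sum>i<length L. step_energy n s (fst (L ! i)) ((x # map snd L) ! i))"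
proof (induction x L rule: final_positions.induct)
  case (2 x G y L)
  then show ?case by (simp add: sum.lessThan_Suc_shift del: sum.lessThan_Suc)
qed simp

definition idle_graph :: graph where
  "idle_graph i j \<longleftrightarrow> i \<in> {1..n} \<and> i = j"

lemma averaging_step_idle:
  assumes "\<forall>i\<in>{1..n}. x i \<in> {0..1}"
  shows "averaging_step n \<rho> x idle_graph x"
proof (rule averaging_stepI)
  show "graph_on n idle_graph"
    unfolding graph_on_def idle_graph_def by auto
  fix i assume "i \<in> {1..n}"
  then have "neighbour_positions n x idle_graph i = {x i, x i}"
    unfolding neighbour_positions_def idle_graph_def by auto
  then show "\<exists>lo hi. lo \<le> hi \<and> neighbour_positions n x idle_graph i = {lo, hi} \<and>
      lo + \<rho> * (hi - lo) \<le> x i \<and> x i \<le> hi - \<rho> * (hi - lo)"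
    by auto
qed (use assms in simp)

text \<open>A finite schedule is played from time 1 on and followed by idle steps forever.\<close>

definition schedule_graph :: "schedule \<Rightarrow> nat \<Rightarrow> graph" where
  "schedule_graph L t = (if 1 \<le> t \<and> t \<le> length L then fst (L ! (t - 1)) else idle_graph)"

end

definition schedule_position :: "positions \<Rightarrow> schedule \<Rightarrow> nat \<Rightarrow> positions" where
  "schedule_position x L t = (x # map snd L) ! min (t - 1) (length L)"

lemma averaging_system_of_schedule:
  assumes "0 < \<rho>" "\<rho> \<le> 1/2" "admissible n \<rho> x L"
    and "\<forall>i\<in>{1..n}. final_positions x L i \<in> {0..1}"
  shows "averaging_system n \<rho> (schedule_graph n L) (schedule_position x L)"
  unfolding averaging_system_iff_steps
proof (intro conjI allI impI assms(1,2))
  fix t :: nat assume "1 \<le> t"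
  show "averaging_step n \<rho> (schedule_position x L t) (schedule_graph n L t) (schedule_position x L (Suc t))"
  proof (cases "t \<le> length L")
    case True
    then have "(x # map snd L) ! t = snd (L ! (t - 1))"
      using \<open>1 \<le> t\<close> by (cases t) auto
    then show ?thesis
      using admissible_nth[OF assms(3), of "t - 1"] True \<open>1 \<le> t\<close>
      unfolding schedule_position_def schedule_graph_def by auto
  next
    case False
    then have "schedule_position x L t = final_positions x L"
      "schedule_position x L (Suc t) = final_positions x L"
      unfolding schedule_position_def final_positions_eq_last by (simp_all add: last_conv_nth)
    then show ?thesis
      using False assms(4) averaging_step_idle unfolding schedule_graph_def by simp
  qed
qed

lemma s_energy_of_schedule:
  "ennreal (schedule_energy n s x L) \<le> s_energy n (schedule_graph n L) (schedule_position x L) s"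
proof -
  have "schedule_energy n s x L = (\<Sum>t<length L. ell n (schedule_graph n L) (schedule_position x L) s (Suc t))"
    unfolding schedule_energy_eq_sum ell_eq_step_energy schedule_graph_def schedule_position_def
    by (intro sum.cong) auto
  then have "ennreal (schedule_energy n s x L) =
      (\<Sum>t<length L. ennreal (ell n (schedule_graph n L) (schedule_position x L) s (Suc t)))"
    by (simp add: ell_eq_step_energy step_energy_nonneg sum_nonneg sum_ennreal)
  also have "\<dots> \<le> s_energy n (schedule_graph n L) (schedule_position x L) s"
    unfolding s_energy_def by (intro sum_le_suminf summableI) auto
  finally show ?thesis .
qed

context
  fixes n :: nat
begin

definition edge_graph :: "nat \<Rightarrow> nat \<Rightarrow> graph" where
  "edge_graph a b i j \<longleftrightarrow> idle_graph n i j \<or> (i = a \<and> j = b) \<or> (i = b \<and> j = a)"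

definition tail_clique :: "nat \<Rightarrow> graph" where
  "tail_clique a i j \<longleftrightarrow> idle_graph n i j \<or> (i \<in> {a..n} \<and> j \<in> {a..n})"

definition split_tail :: "nat \<Rightarrow> real \<Rightarrow> real \<Rightarrow> positions \<Rightarrow> bool" where
  "split_tail a c D x \<longleftrightarrow> a \<in> {1..n} \<and> 0 < D \<and> 0 \<le> c \<and> c + D \<le> 1 \<and> x a = c + D \<and>
     (\<forall>i\<in>{a<..n}. x i = c) \<and> (\<forall>i\<in>{1..n}. x i \<in> {0..1})"

lemma graph_on_edge_graph: "a \<in> {1..n} \<Longrightarrow> b \<in> {1..n} \<Longrightarrow> graph_on n (edge_graph a b)"
  unfolding graph_on_def edge_graph_def idle_graph_def by auto

lemma graph_on_tail_clique: "1 \<le> a \<Longrightarrow> graph_on n (tail_clique a)"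
  unfolding graph_on_def tail_clique_def idle_graph_def by auto

lemma neighbour_positions_edge_graph:
  assumes "a \<in> {1..n}" "b \<in> {1..n}" "i \<in> {1..n}"
  shows "neighbour_positions n x (edge_graph a b) i = (if i = a \<or> i = b then {x a, x b} else {x i})"
  using assms unfolding neighbour_positions_def edge_graph_def idle_graph_def by auto

lemma neighbour_positions_tail_clique:
  assumes "1 \<le> a" "i \<in> {1..n}"
  shows "neighbour_positions n x (tail_clique a) i = (if i \<in> {a..n} then x ` {a..n} else {x i})"
  using assms unfolding neighbour_positions_def tail_clique_def idle_graph_def by auto

lemma split_tail_image:
  assumes "split_tail a c D x" "a < n"
  shows "x ` {a..n} = {c, c + D}"
proof -
  have "{a..n} = insert a {a<..n}" "{a<..n} \<noteq> {}"
    using assms(2) by auto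
  then show ?thesis
    using assms(1) unfolding split_tail_def by auto
qed

lemma edge_step:
  assumes "\<rho> \<le> 1/2" "split_tail a c D x" "a < n"
  shows "averaging_step n \<rho> x (edge_graph a (Suc a)) (x(a := c + (1 - \<rho>) * D, Suc a := c + \<rho> * D))"
    (is "averaging_step n \<rho> x ?G ?y")
proof (rule averaging_stepI)
  have a: "a \<in> {1..n}" "Suc a \<in> {1..n}" "x a = c + D" "x (Suc a) = c" "0 < D"
    using assms(2,3) unfolding split_tail_def by auto
  then show "graph_on n ?G"
    by (intro graph_on_edge_graph)
  show "\<forall>i\<in>{1..n}. x i \<in> {0..1}"
    using assms(2) unfolding split_tail_def by blast
  fix i assume i: "i \<in> {1..n}"
  show "\<exists>lo hi. lo \<le> hi \<and> neighbour_positions n x ?G i = {lo, hi} \<and>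
      lo + \<rho> * (hi - lo) \<le> ?y i \<and> ?y i \<le> hi - \<rho> * (hi - lo)"
  proof (cases "i = a \<or> i = Suc a")
    case True
    have "\<rho> * D \<le> (1 - \<rho>) * D"
      using assms(1) a(5) by (intro mult_right_mono) auto
    then show ?thesis
      using True a neighbour_positions_edge_graph[OF a(1,2) i]
      by (intro exI[of _ c] exI[of _ "c + D"]) (auto simp: algebra_simps)
  next
    case False
    then show ?thesis
      using neighbour_positions_edge_graph[OF a(1,2) i] by auto
  qed
qed

lemma edge_step_energy:
  assumes "0 \<le> s" "split_tail a c D x" "a < n"
  shows "D powr s \<le> step_energy n s (edge_graph a (Suc a)) x"
proof -
  have "a \<in> {1..n}" "Suc a \<in> {1..n}" "x a - x (Suc a) = D" "0 < D"
    using assms(2,3) unfolding split_tail_def by auto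
  then show ?thesis
    using step_energy_ge_edge[OF assms(1) graph_on_edge_graph, of a "Suc a" a "Suc a" x]
    by (auto simp: edge_graph_def)
qed

lemma clique_step:
  assumes "\<rho> \<le> 1/2" "split_tail a c D x" "a < n"
  shows "averaging_step n \<rho> x (tail_clique a) (\<lambda>i. if i \<in> {a..n} then (x a + x (Suc a)) / 2 else x i)"
    (is "averaging_step n \<rho> x ?G ?y")
proof (rule averaging_stepI)
  have a: "1 \<le> a" "x a = c + D" "x (Suc a) = c" "0 < D"
    using assms(2,3) unfolding split_tail_def by auto
  then show "graph_on n ?G"
    by (intro graph_on_tail_clique)
  show "\<forall>i\<in>{1..n}. x i \<in> {0..1}"
    using assms(2) unfolding split_tail_def by blast
  fix i assume i: "i \<in> {1..n}"
  show "\<exists>lo hi. lo \<le> hi \<and> neighbour_positions n x ?G i = {lo, hi} \<and>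
      lo + \<rho> * (hi - lo) \<le> ?y i \<and> ?y i \<le> hi - \<rho> * (hi - lo)"
  proof (cases "i \<in> {a..n}")
    case True
    have "\<rho> * D \<le> D / 2"
      using assms(1) a(4) mult_right_mono[of \<rho> "1/2" D] by simp
    then have "c + \<rho> * (c + D - c) \<le> ?y i" "?y i \<le> c + D - \<rho> * (c + D - c)"
      using True a by auto
    then show ?thesis
      using True a(4) neighbour_positions_tail_clique[OF a(1) i] split_tail_image[OF assms(2,3)]
      by (intro exI[of _ c] exI[of _ "c + D"]) auto
  next
    case False
    then show ?thesis
      using neighbour_positions_tail_clique[OF a(1) i] by auto
  qed
qed

end

definition collapses_tail :: "nat \<Rightarrow> real \<Rightarrow> nat \<Rightarrow> real \<Rightarrow> real \<Rightarrow> positions \<Rightarrow> schedule \<Rightarrow> bool" where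
  "collapses_tail n \<rho> a c D x L \<longleftrightarrow> admissible n \<rho> x L \<and>
     (\<exists>p\<in>{c..c + D}. \<forall>i\<in>{a..n}. final_positions x L i = p) \<and>
     (\<forall>i. i \<notin> {a..n} \<longrightarrow> final_positions x L i = x i)"

context
  fixes n :: nat and \<rho> :: real
begin

text \<open>The point where
  the tail was collapsed is the base c of the next round.\<close>

definition cascade_round ::
    "(nat \<Rightarrow> real \<Rightarrow> real \<Rightarrow> positions \<Rightarrow> schedule) \<Rightarrow> nat \<Rightarrow> real \<Rightarrow> real \<Rightarrow> positions \<Rightarrow> schedule" where
  "cascade_round sub a c D x =
     (let y = x(a := c + (1 - \<rho>) * D, Suc a := c + \<rho> * D)
      in (edge_graph n a (Suc a), y) # sub (Suc a) c (\<rho> * D) y)"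

fun cascade_rounds ::
    "(nat \<Rightarrow> real \<Rightarrow> real \<Rightarrow> positions \<Rightarrow> schedule) \<Rightarrow> nat \<Rightarrow> nat \<Rightarrow> real \<Rightarrow> real \<Rightarrow> positions \<Rightarrow> schedule" where
  "cascade_rounds sub 0 a c D x = []"
| "cascade_rounds sub (Suc j) a c D x =
     (let L = cascade_round sub a c D x; z = final_positions x L
      in L @ cascade_rounds sub j a (z (Suc a)) (c + (1 - \<rho>) * D - z (Suc a)) z)"

primrec cascade :: "nat \<Rightarrow> nat \<Rightarrow> nat \<Rightarrow> real \<Rightarrow> real \<Rightarrow> positions \<Rightarrow> schedule" where
  "cascade m 0 a c D x = []"
| "cascade m (Suc k) a c D x =
     (let L = cascade_rounds (cascade m k) m a c D x; z = final_positions x L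
      in L @ [(tail_clique n a, \<lambda>i. if i \<in> {a..n} then (z a + z (Suc a)) / 2 else z i)])"

end

text \<open>The energy of a k-level cascade in units of D^s: the i-th of its m rounds starts from a gap of
  at least (1-2\<rho>)^i D.\<close>

primrec cascade_energy :: "real \<Rightarrow> real \<Rightarrow> nat \<Rightarrow> nat \<Rightarrow> real" where
  "cascade_energy \<rho> s m 0 = 0"
| "cascade_energy \<rho> s m (Suc k) = (\<Sum>i<m. ((1 - 2 * \<rho>) powr s) ^ i) * (1 + \<rho> powr s * cascade_energy \<rho> s m k)"

lemma cascade_energy_nonneg: "0 \<le> cascade_energy \<rho> s m k"
  by (induction k) (auto intro!: sum_nonneg mult_nonneg_nonneg add_nonneg_nonneg)

context
  fixes n :: nat and \<rho> s e :: real and sub :: "nat \<Rightarrow> real \<Rightarrow> real \<Rightarrow> positions \<Rightarrow> schedule" and a :: nat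
  assumes \<rho>: "0 < \<rho>" "\<rho> < 1/2" and s: "0 \<le> s" and e: "0 \<le> e" and a: "a < n"
    and sub: "\<And>c D x. split_tail n (Suc a) c D x \<Longrightarrow>
      collapses_tail n \<rho> (Suc a) c D x (sub (Suc a) c D x) \<and>
      D powr s * e \<le> schedule_energy n s x (sub (Suc a) c D x)"
begin

lemma cascade_round_spec:
  assumes "split_tail n a c D x"
  obtains p where "admissible n \<rho> x (cascade_round n \<rho> sub a c D x)"
    and "\<forall>i. i \<notin> {a..n} \<longrightarrow> final_positions x (cascade_round n \<rho> sub a c D x) i = x i"
    and "c \<le> p" "(1 - 2 * \<rho>) * D \<le> c + (1 - \<rho>) * D - p"
    and "split_tail n a p (c + (1 - \<rho>) * D - p) (final_positions x (cascade_round n \<rho> sub a c D x))"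
    and "D powr s + \<rho> powr s * D powr s * e \<le> schedule_energy n s x (cascade_round n \<rho> sub a c D x)"
proof -
  have x: "a \<in> {1..n}" "0 < D" "0 \<le> c" "c + D \<le> 1" "x a = c + D" "\<forall>i\<in>{a<..n}. x i = c"
      "\<forall>i\<in>{1..n}. x i \<in> {0..1}"
    using assms unfolding split_tail_def by auto
  have \<rho>D: "0 < \<rho> * D" "\<rho> * D < D / 2"
    using \<rho> x(2) by auto
  define y where "y = x(a := c + (1 - \<rho>) * D, Suc a := c + \<rho> * D)"
  define L where "L = sub (Suc a) c (\<rho> * D) y"
  define z where "z = final_positions y L"
  have round: "cascade_round n \<rho> sub a c D x = (edge_graph n a (Suc a), y) # L"
    unfolding cascade_round_def y_def L_def Let_def ..
  then have final: "final_positions x (cascade_round n \<rho> sub a c D x) = z"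
    by (simp add: z_def)
  have "split_tail n (Suc a) c (\<rho> * D) y"
    using x \<rho>D a unfolding split_tail_def y_def by (auto simp: algebra_simps)
  from sub[OF this] obtain p where L: "admissible n \<rho> y L"
    and p: "p \<in> {c..c + \<rho> * D}" "\<forall>i\<in>{Suc a..n}. z i = p"
    and z_out: "\<forall>i. i \<notin> {Suc a..n} \<longrightarrow> z i = y i"
    and L_energy: "(\<rho> * D) powr s * e \<le> schedule_energy n s y L"
    unfolding collapses_tail_def L_def[symmetric] z_def[symmetric] by blast
  show thesis
  proof (rule that[of p])
    show "admissible n \<rho> x (cascade_round n \<rho> sub a c D x)"
      unfolding round using edge_step[OF _ assms a] L \<rho> by (simp add: y_def)
    show "\<forall>i. i \<notin> {a..n} \<longrightarrow> final_positions x (cascade_round n \<rho> sub a c D x) i = x i"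
      unfolding final using z_out a by (auto simp: y_def)
    show "c \<le> p" "(1 - 2 * \<rho>) * D \<le> c + (1 - \<rho>) * D - p"
      using p(1) by (auto simp: algebra_simps)
    have "z i \<in> {0..1}" if "i \<in> {1..n}" for i
    proof (cases "i \<in> {Suc a..n}")
      case True
      then show ?thesis using p x \<rho>D by auto
    next
      case False
      then show ?thesis using that z_out x \<rho>D by (auto simp: y_def algebra_simps)
    qed
    then show "split_tail n a p (c + (1 - \<rho>) * D - p) (final_positions x (cascade_round n \<rho> sub a c D x))"
      unfolding final split_tail_def using x \<rho>D p z_out a
      by (auto simp: y_def algebra_simps)
    have "D powr s \<le> step_energy n s (edge_graph n a (Suc a)) x"
      by (rule edge_step_energy[OF s assms a])
    then show "D powr s + \<rho> powr s * D powr s * e \<le> schedule_energy n s x (cascade_round n \<rho> sub a c D x)"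
      unfolding round using L_energy \<rho> x(2) by (simp add: powr_mult)
  qed
qed

lemma cascade_rounds_spec:
  assumes "split_tail n a c D x"
  shows "admissible n \<rho> x (cascade_rounds n \<rho> sub j a c D x) \<and>
    (\<forall>i. i \<notin> {a..n} \<longrightarrow> final_positions x (cascade_rounds n \<rho> sub j a c D x) i = x i) \<and>
    (\<exists>c' D'. split_tail n a c' D' (final_positions x (cascade_rounds n \<rho> sub j a c D x)) \<and>
       c \<le> c' \<and> c' + D' \<le> c + D) \<and>
    (\<Sum>i<j. ((1 - 2 * \<rho>) powr s) ^ i) * D powr s * (1 + \<rho> powr s * e)
      \<le> schedule_energy n s x (cascade_rounds n \<rho> sub j a c D x)"
  using assms
proof (induction j arbitrary: c D x)
  case (Suc j)
  define r where "r = (1 - 2 * \<rho>) powr s"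
  define F where "F = 1 + \<rho> powr s * e"
  define L where "L = cascade_round n \<rho> sub a c D x"
  define z where "z = final_positions x L"
  define D1 where "D1 = c + (1 - \<rho>) * D - z (Suc a)"
  define R where "R = cascade_rounds n \<rho> sub j a (z (Suc a)) D1 z"
  have rounds: "cascade_rounds n \<rho> sub (Suc j) a c D x = L @ R"
    unfolding L_def z_def D1_def R_def by (simp add: Let_def)
  obtain p where L: "admissible n \<rho> x L" "\<forall>i. i \<notin> {a..n} \<longrightarrow> z i = x i"
    and p: "c \<le> p" "(1 - 2 * \<rho>) * D \<le> c + (1 - \<rho>) * D - p" "split_tail n a p (c + (1 - \<rho>) * D - p) z"
    and L_energy: "D powr s + \<rho> powr s * D powr s * e \<le> schedule_energy n s x L"
    using cascade_round_spec[OF Suc.prems] unfolding L_def[symmetric] z_def[symmetric] by blast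
  have "p = z (Suc a)"
    using p(3) a unfolding split_tail_def by auto
  then have D1: "(1 - 2 * \<rho>) * D \<le> D1" "split_tail n a (z (Suc a)) D1 z"
    using p unfolding D1_def by auto
  obtain c' D' where R: "admissible n \<rho> z R" "\<forall>i. i \<notin> {a..n} \<longrightarrow> final_positions z R i = z i"
      "split_tail n a c' D' (final_positions z R)" "z (Suc a) \<le> c'" "c' + D' \<le> z (Suc a) + D1"
    and R_energy: "(\<Sum>i<j. r ^ i) * D1 powr s * F \<le> schedule_energy n s z R"
    using Suc.IH[OF D1(2)] unfolding R_def[symmetric] r_def[symmetric] F_def[symmetric] by blast
  have "r * D powr s \<le> D1 powr s"
    unfolding r_def using \<rho> s D1(1) Suc.prems
    by (simp add: powr_mult[symmetric] split_tail_def powr_mono2)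
  then have "(\<Sum>i<j. r ^ i) * (r * D powr s) * F \<le> (\<Sum>i<j. r ^ i) * D1 powr s * F"
    using e by (intro mult_right_mono mult_left_mono sum_nonneg) (auto simp: r_def F_def)
  moreover have "(\<Sum>i<Suc j. r ^ i) * D powr s * F = D powr s * F + (\<Sum>i<j. r ^ i) * (r * D powr s) * F"
    by (simp add: sum.lessThan_Suc_shift sum_distrib_left algebra_simps del: sum.lessThan_Suc)
  ultimately have "(\<Sum>i<Suc j. r ^ i) * D powr s * F \<le> schedule_energy n s x (L @ R)"
    using L_energy R_energy by (simp add: z_def F_def algebra_simps)
  moreover have "0 < \<rho> * D"
    using \<rho> Suc.prems unfolding split_tail_def by simp
  then have "c \<le> c'" "c' + D' \<le> c + D"
    using R(4,5) p(1) \<open>p = z (Suc a)\<close> unfolding D1_def by (auto simp: algebra_simps)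
  ultimately show ?case
    unfolding rounds r_def F_def using L R by (auto simp: z_def[symmetric])
qed auto

end

lemma cascade_spec:
  assumes "0 < \<rho>" "\<rho> < 1/2" "0 \<le> s" "a + k = n" "split_tail n a c D x"
  shows "collapses_tail n \<rho> a c D x (cascade n \<rho> m k a c D x) \<and>
    D powr s * cascade_energy \<rho> s m k \<le> schedule_energy n s x (cascade n \<rho> m k a c D x)"
  using assms(4,5)
proof (induction k arbitrary: a c D x)
  case 0
  then have "x a = c + D" "0 < D"
    unfolding split_tail_def by auto
  with 0 show ?case
    unfolding collapses_tail_def by (auto intro!: bexI[of _ "c + D"])
next
  case (Suc k)
  define R where "R = cascade_rounds n \<rho> (cascade n \<rho> m k) m a c D x"
  define z where "z = final_positions x R"
  define y where "y = (\<lambda>i. if i \<in> {a..n} then (z a + z (Suc a)) / 2 else z i)"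
  have cascade: "cascade n \<rho> m (Suc k) a c D x = R @ [(tail_clique n a, y)]"
    unfolding R_def z_def y_def by (simp add: Let_def)
  have a: "a < n"
    using Suc.prems(1) by simp
  have sub: "collapses_tail n \<rho> (Suc a) c D x (cascade n \<rho> m k (Suc a) c D x) \<and>
      D powr s * cascade_energy \<rho> s m k \<le> schedule_energy n s x (cascade n \<rho> m k (Suc a) c D x)"
    if "split_tail n (Suc a) c D x" for c D x
    using Suc.IH[OF _ that] Suc.prems(1) by simp
  obtain c' D' where R: "admissible n \<rho> x R" "\<forall>i. i \<notin> {a..n} \<longrightarrow> z i = x i"
      "split_tail n a c' D' z" "c \<le> c'" "c' + D' \<le> c + D"
    and R_energy: "D powr s * cascade_energy \<rho> s m (Suc k) \<le> schedule_energy n s x R"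
    using cascade_rounds_spec[where sub = "cascade n \<rho> m k" and e = "cascade_energy \<rho> s m k" and j = m,
        OF assms(1-3) cascade_energy_nonneg a sub Suc.prems(2)]
    unfolding R_def[symmetric] z_def[symmetric] by (auto simp: algebra_simps)
  have "z a = c' + D'" "z (Suc a) = c'" "0 < D'"
    using R(3) a unfolding split_tail_def by auto
  then have "collapses_tail n \<rho> a c D x (R @ [(tail_clique n a, y)])"
    unfolding collapses_tail_def using R clique_step[OF _ R(3) a] assms(2)
    by (auto simp: z_def[symmetric] y_def intro!: bexI[of _ "c' + D' / 2"])
  moreover have "D powr s * cascade_energy \<rho> s m (Suc k) \<le> schedule_energy n s x (R @ [(tail_clique n a, y)])"
    using R_energy step_energy_nonneg[of n s "tail_clique n a" z] by (simp add: z_def)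
  ultimately show ?case
    unfolding cascade by blast
qed

lemma powr_ge_one_plus_ln:
  fixes x t :: real
  assumes "0 < x"
  shows "1 + t * ln x \<le> x powr t"
  using assms exp_ge_add_one_self[of "t * ln x"] by (simp add: powr_def)

lemma ln_one_minus_ge:
  fixes x :: real
  assumes "0 \<le> x" "x < 1"
  shows "- x / (1 - x) \<le> ln (1 - x)"
proof -
  have "ln (1 / (1 - x)) \<le> 1 / (1 - x) - 1"
    using assms by (intro ln_le_minus_one) auto
  then show ?thesis
    using assms by (simp add: ln_div field_simps)
qed

lemma geometric_sum_ge:
  fixes r :: real
  assumes "0 \<le> r" "r \<le> 1"
  shows "real m * r ^ m \<le> (\<Sum>i<m. r ^ i)"
proof -
  have "(\<Sum>i<m. r ^ m) \<le> (\<Sum>i<m. r ^ i)"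
    using assms by (intro sum_mono power_decreasing) auto
  then show ?thesis by simp
qed

lemma cascade_energy_ge_power:
  assumes "0 < \<rho>" "\<rho> \<le> 1" "0 \<le> s" "1 \<le> k"
  shows "((\<Sum>i<m. ((1 - 2 * \<rho>) powr s) ^ i) * \<rho> powr s) ^ k \<le> cascade_energy \<rho> s m k"
  using assms(4)
proof (induction k rule: dec_induct)
  case base
  have "\<rho> powr s \<le> 1"
    using assms(1-3) by (intro powr_le1) auto
  then show ?case
    by (simp add: mult_left_le sum_nonneg)
next
  case (step k)
  let ?S = "\<Sum>i<m. ((1 - 2 * \<rho>) powr s) ^ i"
  have "(?S * \<rho> powr s) ^ Suc k \<le> ?S * (\<rho> powr s * cascade_energy \<rho> s m k)"
    using step.IH by (simp add: mult.assoc mult_left_mono sum_nonneg)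
  also have "\<dots> \<le> cascade_energy \<rho> s m (Suc k)"
    by (simp add: mult_left_mono sum_nonneg)
  finally show ?case .
qed

lemma cascade_energy_lower:
  assumes \<rho>: "0 < \<rho>" "\<rho> \<le> 1/3" and s: "0 < s" "s * log 2 (1 / \<rho>) \<le> 1/4" and k: "1 \<le> k"
  shows "(1/96 / (\<rho> * s)) ^ k \<le> cascade_energy \<rho> s (nat \<lfloor>1 / (12 * \<rho> * s)\<rfloor>) k"
proof -
  define y where "y = 1 / (12 * \<rho> * s)"
  define m where "m = nat \<lfloor>y\<rfloor>"
  define r where "r = (1 - 2 * \<rho>) powr s"
  have "1 \<le> log 2 (1 / \<rho>)"
    using \<rho> log_mono[of 2 2 "1 / \<rho>"] by (simp add: field_simps)
  then have "s \<le> 1/4"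
    using s mult_left_mono[of 1 "log 2 (1 / \<rho>)" s] by linarith
  then have "\<rho> * s \<le> 1/12"
    using \<rho> s mult_mono[of \<rho> "1/3" s "1/4"] by simp
  then have "1 \<le> y"
    using \<rho> s unfolding y_def by (simp add: field_simps)
  moreover have "real m = of_int \<lfloor>y\<rfloor>"
    using \<open>1 \<le> y\<close> unfolding m_def by simp
  ultimately have m: "y / 2 \<le> real m" "real m \<le> y"
    using of_int_floor_le[of y] real_of_int_floor_gt_diff_one[of y] le_floor_iff[of 1 y] by linarith+
  have "1/2 \<le> \<rho> powr s"
  proof -
    have "s * ln \<rho> = - (s * log 2 (1 / \<rho>)) * ln 2"
      using \<rho> by (simp add: log_def ln_div)
    then have "- ln 2 / 4 \<le> s * ln \<rho>"
      using s(2) ln_2_less_1 by (simp add: mult_right_mono)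
    then show ?thesis
      using powr_ge_one_plus_ln[OF \<rho>(1), of s] ln_2_less_1 by linarith
  qed
  have "1/2 \<le> r ^ m"
  proof -
    have "- 6 * \<rho> \<le> - (2 * \<rho>) / (1 - 2 * \<rho>)"
      using \<rho> by (simp add: field_simps)
    also have "\<dots> \<le> ln (1 - 2 * \<rho>)"
      using \<rho> by (intro ln_one_minus_ge) auto
    finally have "- 6 * \<rho> \<le> ln (1 - 2 * \<rho>)" .
    moreover have "real m * s * (6 * \<rho>) \<le> 1/2"
      using m(2) \<rho> s unfolding y_def by (simp add: field_simps)
    ultimately have "1/2 \<le> 1 + real m * s * ln (1 - 2 * \<rho>)"
      using s mult_left_mono[of "- 6 * \<rho>" "ln (1 - 2 * \<rho>)" "real m * s"] by simp
    also have "\<dots> \<le> r ^ m"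
      using powr_ge_one_plus_ln[of "1 - 2 * \<rho>" "real m * s"] \<rho>
      unfolding r_def by (simp add: powr_powr powr_realpow[symmetric] mult.commute)
    finally show ?thesis .
  qed
  have "r \<le> 1"
    unfolding r_def using \<rho> s by (intro powr_le1) auto
  then have "real m * (1/2) \<le> (\<Sum>i<m. r ^ i)"
    using geometric_sum_ge[of r m] \<open>1/2 \<le> r ^ m\<close> mult_left_mono[of "1/2" "r ^ m" "real m"]
    unfolding r_def by simp
  then have "1/96 / (\<rho> * s) \<le> (\<Sum>i<m. r ^ i) * \<rho> powr s"
    using m(1) \<open>1/2 \<le> \<rho> powr s\<close> mult_mono[of "real m * (1/2)" "\<Sum>i<m. r ^ i" "1/2" "\<rho> powr s"]
    unfolding y_def by (simp add: field_simps)
  then have "(1/96 / (\<rho> * s)) ^ k \<le> ((\<Sum>i<m. r ^ i) * \<rho> powr s) ^ k"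
    using \<rho> s by (intro power_mono) auto
  also have "\<dots> \<le> cascade_energy \<rho> s m k"
    unfolding r_def using cascade_energy_ge_power[of \<rho> s k m] \<rho> s k by simp
  finally show ?thesis
    unfolding m_def y_def .
qed

lemma averaging_system_with_large_energy:
  fixes \<rho> s :: real
  assumes n: "2 \<le> n" and \<rho>: "0 < \<rho>" "\<rho> \<le> 1/3" and s: "0 < s" "s * log 2 (1/\<rho>) \<le> 1/4"
  shows "\<exists>g x. averaging_system n \<rho> g x \<and> ennreal ((1/96 / (\<rho> * s)) ^ (n - 1)) \<le> s_energy n g x s"
proof -
  define x :: positions where "x = (\<lambda>i. if i = 1 then 1 else 0)"
  define L where "L = cascade n \<rho> (nat \<lfloor>1 / (12 * \<rho> * s)\<rfloor>) (n - 1) 1 0 1 x"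
  have "split_tail n 1 0 1 x"
    unfolding split_tail_def x_def using n by auto
  then have L: "collapses_tail n \<rho> 1 0 1 x L"
    and L_energy: "cascade_energy \<rho> s (nat \<lfloor>1 / (12 * \<rho> * s)\<rfloor>) (n - 1) \<le> schedule_energy n s x L"
    using cascade_spec[of \<rho> s 1 "n - 1" n 0 1 x "nat \<lfloor>1 / (12 * \<rho> * s)\<rfloor>"] \<rho> s n
    unfolding L_def by auto
  have "averaging_system n \<rho> (schedule_graph n L) (schedule_position x L)"
    using L \<rho> unfolding collapses_tail_def by (intro averaging_system_of_schedule) auto
  moreover have "1 \<le> n - 1"
    using n by simp
  then have "(1/96 / (\<rho> * s)) ^ (n - 1) \<le> schedule_energy n s x L"
    using cascade_energy_lower[OF \<rho> s] L_energy by (meson order_trans)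
  ultimately show ?thesis
    using s_energy_of_schedule order_trans ennreal_leI by blast
qed

theorem mainTheorem7:
  shows "\<exists>c1 c2 :: real. c1 > 0 \<and> c2 > 0 \<and>
    (\<forall>n::nat. \<forall>\<rho>::real. \<forall>s::real.
       n \<ge> 2 \<longrightarrow> 0 < \<rho> \<longrightarrow> \<rho> \<le> 1/3 \<longrightarrow> 0 < s \<longrightarrow> s \<le> c1 / log 2 (1/\<rho>) \<longrightarrow>
       (\<exists>g x. averaging_system n \<rho> g x \<and>
          s_energy n g x s \<ge> ennreal ((c2 / (\<rho> * s)) ^ (n - 1))))"
proof (rule exI[of _ "1/4"], rule exI[of _ "1/96"], intro conjI allI impI)
  fix n :: nat and \<rho> s :: real
  assume n: "2 \<le> n" and \<rho>: "0 < \<rho>" "\<rho> \<le> 1/3" and s: "0 < s" "s \<le> (1/4) / log 2 (1/\<rho>)"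
  then have "s * log 2 (1/\<rho>) \<le> 1/4"
    by (simp add: field_simps)
  from averaging_system_with_large_energy[OF n \<rho> s(1) this]
  show "\<exists>g x. averaging_system n \<rho> g x \<and> ennreal ((1/96 / (\<rho> * s)) ^ (n - 1)) \<le> s_energy n g x s" .
qed auto

end
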